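(* Let $\mathcal{A}=\langle\Sigma,Q,Q_0,\delta,\alpha\rangle$ be a GFG automaton and let $g=\langle\Sigma,Q,M,m_0,\rho,\tau\rangle$ be a finite-state strategy (transducer) witnessing its GFGness. Then: (1) for every state $q\in Q$ and every memory $m\in M$ of $q$ (i.e. $\tau(m)=q$) that is reachable in $\mathcal{A}_g$, we have $L(\mathcal{A}_g^m)=L(\mathcal{A}^q)$; (2) for all memories $m,m'\in M$ that are reachable in $\mathcal{A}_g$ with $\tau(m)=\tau(m')$, we have $L(\mathcal{A}_g^m)=L(\mathcal{A}_g^{m'})$.
   Context: An automaton is $\mathcal{A}=\langle\Sigma,Q,Q_0,\delta,\alpha\rangle$ with finite alphabet $\Sigma$, finite state set $Q$, initial states $Q_0\subseteq Q$, transition function $\delta:Q\times\Sigma\to 2^Q$ and an acceptance condition $\alpha$ (Büchi, co-Büchi, parity, Rabin or Streett). A run on $w=a_1a_2\cdots$ is $r_0r_1\cdots$ with $r_0\in Q_0$ and $r_{i+1}\in\delta(r_i,a_{i+1})$; it is accepting if the set $\inf(r)$ of states visited infinitely often satisfies $\alpha$; $L(\mathcal{A})$ is the set of words with an accepting run. $\mathcal{A}^q$ is $\mathcal{A}$ with initial state set $\{q\}$. $\mathcal{A}$ is good for games (GFG) if there is a strategy $g:\Sigma^*\to Q$ such that for every $w=a_1a_2\cdots$, the sequence $g(\epsilon),g(a_1),g(a_1a_2),\ldots$ is a run of $\mathcal{A}$ on $w$ that is accepting whenever $w\in L(\mathcal{A})$; $g$ then witnesses $\mathcal{A}$'s GFGness.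 A finite-state strategy is given by a transducer $\langle\Sigma,Q,M,m_0,\rho,\tau\rangle$ with finite memory set $M$, initial memory $m_0$, update $\rho:M\times\Sigma\to M$ (extended to words by $\rho(\epsilon)=m_0$, $\rho(ua)=\rho(\rho(u),a)$) and output $\tau:M\to Q$, generating $g(u)=\tau(\rho(u))$. A memory $m$ with $\tau(m)=q$ is a memory of $q$. $\mathcal{A}_g=\langle\Sigma,M,m_0,\rho,\alpha_g\rangle$ is the deterministic automaton where $\alpha_g$ is obtained from $\alpha$ by replacing every set $F\subseteq Q$ occurring in $\alpha$ by $\{m\mid\tau(m)\in F\}$ (for parity, $m$ gets the priority of $\tau(m)$); $\mathcal{A}_g^m$ is $\mathcal{A}_g$ with initial memory $m$. *)

theory Defs
  imports Main
begin

datatype 'q acc =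
    Buchi "'q set"
  | CoBuchi "'q set"
  | Parity "'q \<Rightarrow> nat"
  | Rabin "('q set \<times> 'q set) list"
  | Streett "('q set \<times> 'q set) list"

definition inf_set :: "(nat \<Rightarrow> 'q) \<Rightarrow> 'q set" where
  "inf_set r = {q. \<exists>\<^sub>\<infinity> i. r i = q}"

fun acc_sat :: "'q acc \<Rightarrow> 'q set \<Rightarrow> bool" where
  "acc_sat (Buchi F) S = (S \<inter> F \<noteq> {})"
| "acc_sat (CoBuchi F) S = (S \<inter> F = {})"
| "acc_sat (Parity p) S = even (Min (p ` S))"
| "acc_sat (Rabin prs) S = (\<exists>(E,F)\<in>set prs. S \<inter> E = {} \<and> S \<inter> F \<noteq> {})"
| "acc_sat (Streett prs) S = (\<forall>(E,F)\<in>set prs. S \<inter> E \<noteq> {} \<longrightarrow> S \<inter> F \<noteq> {})"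

(* Automaton over alphabet type 'a (finite) with state type 'q (finite, Q = UNIV) *)
record ('a, 'q) automaton =
  init :: "'q set"
  trans :: "'q \<Rightarrow> 'a \<Rightarrow> 'q set"
  acc :: "'q acc"

(* w i is the letter a_{i+1} *)
definition is_run :: "('a, 'q) automaton \<Rightarrow> (nat \<Rightarrow> 'a) \<Rightarrow> (nat \<Rightarrow> 'q) \<Rightarrow> bool" where
  "is_run A w r \<longleftrightarrow> r 0 \<in> init A \<and> (\<forall>i. r (Suc i) \<in> trans A (r i) (w i))"

definition accepting :: "('a, 'q) automaton \<Rightarrow> (nat \<Rightarrow> 'q) \<Rightarrow> bool" where
  "accepting A r \<longleftrightarrow> acc_sat (acc A) (inf_set r)"

definition lang :: "('a, 'q) automaton \<Rightarrow> (nat \<Rightarrow> 'a) set" where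
  "lang A = {w. \<exists>r. is_run A w r \<and> accepting A r}"

definition from_state :: "('a, 'q) automaton \<Rightarrow> 'q \<Rightarrow> ('a, 'q) automaton" where
  "from_state A q = A\<lparr>init := {q}\<rparr>"

definition witnesses_gfg :: "('a, 'q) automaton \<Rightarrow> ('a list \<Rightarrow> 'q) \<Rightarrow> bool" where
  "witnesses_gfg A g \<longleftrightarrow>
     (\<forall>w. is_run A w (\<lambda>i. g (map w [0..<i])) \<and>
          (w \<in> lang A \<longrightarrow> accepting A (\<lambda>i. g (map w [0..<i]))))"

definition GFG :: "('a, 'q) automaton \<Rightarrow> bool" where
  "GFG A \<longleftrightarrow> (\<exists>g. witnesses_gfg A g)"

record ('a, 'q, 'm) transducer =
  m0 :: 'm
  rho :: "'m \<Rightarrow> 'a \<Rightarrow> 'm"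
  tau :: "'m \<Rightarrow> 'q"

definition rho_word :: "('a, 'q, 'm) transducer \<Rightarrow> 'a list \<Rightarrow> 'm" where
  "rho_word T u = foldl (rho T) (m0 T) u"

definition strat :: "('a, 'q, 'm) transducer \<Rightarrow> 'a list \<Rightarrow> 'q" where
  "strat T u = tau T (rho_word T u)"

fun acc_pull :: "('m \<Rightarrow> 'q) \<Rightarrow> 'q acc \<Rightarrow> 'm acc" where
  "acc_pull t (Buchi F) = Buchi {m. t m \<in> F}"
| "acc_pull t (CoBuchi F) = CoBuchi {m. t m \<in> F}"
| "acc_pull t (Parity p) = Parity (\<lambda>m. p (t m))"
| "acc_pull t (Rabin prs) = Rabin (map (\<lambda>(E,F). ({m. t m \<in> E}, {m. t m \<in> F})) prs)"
| "acc_pull t (Streett prs) = Streett (map (\<lambda>(E,F). ({m. t m \<in> E}, {m. t m \<in> F})) prs)"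

definition Ag :: "('a, 'q) automaton \<Rightarrow> ('a, 'q, 'm) transducer \<Rightarrow> ('a, 'm) automaton" where
  "Ag A T = \<lparr>init = {m0 T}, trans = (\<lambda>m a. {rho T m a}), acc = acc_pull (tau T) (acc A)\<rparr>"

definition reachable_mem :: "('a, 'q, 'm) transducer \<Rightarrow> 'm \<Rightarrow> bool" where
  "reachable_mem T m \<longleftrightarrow> (\<exists>u. rho_word T u = m)"

end

theory Submission
  imports Defs "HOL-Library.Omega_Words_Fun"
begin

(* If g witnesses GFGness of A, then after any finite prefix u the residual strategy
   v \<mapsto> g(uv) witnesses GFGness of A from the state g(u): a run accepting w from g(u),
   preceded by the run of g on u, is an accepting run on uw, so the run of g on uw
   accepts, and acceptance only depends on the tail.  For the memory m = \<rho>(u), the unique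
   run of A_g from m is mapped by \<tau> onto the run of this residual strategy, and \<alpha>_g is
   the pullback of \<alpha> along \<tau>; hence L(A_g^m) = L(A^\<tau>(m)). *)

lemma inf_set_eq_limit: "inf_set = limit"
  by (simp add: fun_eq_iff inf_set_def limit_def)

lemma limit_comp_finite:
  fixes w :: "nat \<Rightarrow> 'm::finite"
  shows "limit (f \<circ> w) = f ` limit w"
proof
  show "limit (f \<circ> w) \<subseteq> f ` limit w"
    using limit_o_inv[of f _ w] by fastforce
qed auto

lemma limit_conc: "limit (u \<frown> w) = limit w"
  by (metis limit_suffix suffix_conc_length)

lemma acc_sat_acc_pull: "acc_sat (acc_pull t c) S = acc_sat c (t ` S)"
proof -
  have pull: "(S \<inter> {m. t m \<in> E} = {}) = (t ` S \<inter> E = {})" for E by auto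
  show ?thesis by (cases c) (simp_all add: image_comp o_def pull split_def)
qed

lemma accepting_from_state: "accepting (from_state A q) = accepting A"
  by (simp add: fun_eq_iff accepting_def from_state_def)

lemma map_upt_conc: "map (u \<frown> w) [0..<length u + i] = u @ map w [0..<i]"
  using prefix_conc_snd[of u "length u + i" w] by (simp add: subsequence_def)

lemma is_run_from_state_Ag_iff:
  "is_run (from_state (Ag A T) m) w r \<longleftrightarrow> r = (\<lambda>i. foldl (rho T) m (map w [0..<i]))"
proof
  assume run: "is_run (from_state (Ag A T) m) w r"
  show "r = (\<lambda>i. foldl (rho T) m (map w [0..<i]))"
  proof
    show "r i = foldl (rho T) m (map w [0..<i])" for i
      using run by (induction i) (auto simp: is_run_def from_state_def Ag_def)
  qed
qed (auto simp: is_run_def from_state_def Ag_def)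

lemma lang_from_state_Ag:
  fixes T :: "('a, 'q, 'm::finite) transducer"
  shows "lang (from_state (Ag A T) m) =
    {w. accepting A (\<lambda>i. tau T (foldl (rho T) m (map w [0..<i])))}"
  unfolding lang_def is_run_from_state_Ag_iff
  by (simp add: accepting_def inf_set_eq_limit from_state_def Ag_def acc_sat_acc_pull
      limit_comp_finite[symmetric] o_def)

lemma lang_eq_if_witnesses_gfg:
  assumes "witnesses_gfg A g"
  shows "lang A = {w. accepting A (\<lambda>i. g (map w [0..<i]))}"
  using assms unfolding witnesses_gfg_def lang_def by blast

lemma is_run_suffix:
  assumes "is_run A (u \<frown> w) r"
  shows "is_run (from_state A (r (length u))) w (suffix (length u) r)"
proof -
  have "r (Suc (length u + i)) \<in> trans A (r (length u + i)) (w i)" for i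
    using assms[unfolded is_run_def, THEN conjunct2, rule_format, of "length u + i"] by simp
  then show ?thesis by (simp add: is_run_def from_state_def)
qed

lemma is_run_conc:
  assumes r: "is_run A (u \<frown> w) r" and s: "is_run (from_state A (r (length u))) w s"
  shows "is_run A (u \<frown> w) (map r [0..<length u] \<frown> s)" (is "is_run A _ ?r")
  unfolding is_run_def
proof (intro conjI allI)
  show "?r 0 \<in> init A"
    using r s by (cases "u = []") (auto simp: is_run_def from_state_def)
  fix i
  show "?r (Suc i) \<in> trans A (?r i) ((u \<frown> w) i)"
  proof (cases "i < length u")
    case True
    have "r (Suc i) \<in> trans A (r i) (u ! i)"
      using r True unfolding is_run_def by (metis conc_fst)
    then show ?thesis
      using True s by (cases "Suc i < length u") (auto simp: is_run_def from_state_def Suc_le_eq[symmetric])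
  next
    case False
    then show ?thesis
      using s by (auto simp: is_run_def from_state_def Suc_diff_le)
  qed
qed

lemma witnesses_gfg_from_state:
  assumes W: "witnesses_gfg A g"
  shows "witnesses_gfg (from_state A (g u)) (\<lambda>v. g (u @ v))"
  unfolding witnesses_gfg_def
proof (intro allI conjI impI)
  fix w
  let ?R = "\<lambda>i. g (map (u \<frown> w) [0..<i])"
  have run: "is_run A (u \<frown> w) ?R"
    using W unfolding witnesses_gfg_def by blast
  have R_suffix: "suffix (length u) ?R = (\<lambda>i. g (u @ map w [0..<i]))"
    by (simp add: fun_eq_iff map_upt_conc)
  have R_length: "?R (length u) = g u"
    using map_upt_conc[of u w 0] by simp
  show "is_run (from_state A (g u)) w (\<lambda>i. g (u @ map w [0..<i]))"
    using is_run_suffix[OF run] by (simp only: R_suffix R_length)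
  assume "w \<in> lang (from_state A (g u))"
  then obtain s where s: "is_run (from_state A (g u)) w s" "accepting A s"
    unfolding lang_def accepting_from_state by blast
  have "is_run A (u \<frown> w) (map ?R [0..<length u] \<frown> s)"
    using is_run_conc[OF run] s(1) R_length by simp
  moreover have "accepting A (map ?R [0..<length u] \<frown> s)"
    using s(2) by (simp add: accepting_def inf_set_eq_limit limit_conc)
  ultimately have "u \<frown> w \<in> lang A"
    unfolding lang_def by blast
  then have "accepting A ?R"
    using W unfolding witnesses_gfg_def by blast
  then have "accepting A (suffix (length u) ?R)"
    by (simp add: accepting_def inf_set_eq_limit)
  then show "accepting (from_state A (g u)) (\<lambda>i. g (u @ map w [0..<i]))"
    by (simp only: R_suffix accepting_from_state)
qed

lemma lang_from_state_Ag_reachable: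
  fixes T :: "('a, 'q, 'm::finite) transducer"
  assumes W: "witnesses_gfg A (strat T)" and "reachable_mem T m"
  shows "lang (from_state (Ag A T) m) = lang (from_state A (tau T m))"
proof -
  obtain u where m: "rho_word T u = m"
    using assms(2) unfolding reachable_mem_def by blast
  have "tau T (foldl (rho T) m v) = strat T (u @ v)" for v
    by (simp add: strat_def rho_word_def flip: m)
  then have "lang (from_state (Ag A T) m) =
      {w. accepting (from_state A (strat T u)) (\<lambda>i. strat T (u @ map w [0..<i]))}"
    by (simp add: lang_from_state_Ag accepting_from_state)
  also have "\<dots> = lang (from_state A (strat T u))"
    using lang_eq_if_witnesses_gfg[OF witnesses_gfg_from_state[OF W]] by blast
  finally show ?thesis
    by (simp add: strat_def m)
qed

theorem lemma2:
  fixes A :: "('a::finite, 'q::finite) automaton"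
    and T :: "('a, 'q, 'm::finite) transducer"
  assumes "GFG A"
    and "witnesses_gfg A (strat T)"
  shows "(\<forall>q m. tau T m = q \<and> reachable_mem T m \<longrightarrow>
            lang (from_state (Ag A T) m) = lang (from_state A q))
       \<and> (\<forall>m m'. reachable_mem T m \<and> reachable_mem T m' \<and> tau T m = tau T m' \<longrightarrow>
            lang (from_state (Ag A T) m) = lang (from_state (Ag A T) m'))"
  using lang_from_state_Ag_reachable[OF assms(2)] by metis

end
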